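(* Let $\mathcal{F}=\mathcal{B}(K_3)$. Then $R_3(\mathcal{F},2)=R_3(\mathcal{F},3)=5$, $R_3(\mathcal{F},4)=6$, $R_3(\mathcal{F},5)=7$, $R_3(\mathcal{F},6)=8$, and $R_3(\mathcal{F},8)=9$.
   Context: For a graph $G$, a hypergraph $H$ is a Berge-$G$ hypergraph if there are an injective map $\phi:V(G)\to V(H)$ and pairwise distinct hyperedges $e_{xy}\in E(H)$, one for each $xy\in E(G)$, with $\phi(x),\phi(y)\in e_{xy}$. $\mathcal{B}(G)$ denotes the family of all Berge-$G$ hypergraphs. $K_n^r$ denotes the complete $r$-uniform hypergraph on $n$ vertices. For a family $\mathcal{H}$ of $r$-uniform hypergraphs and integers $k\ge 2$, $r\ge 2$, the Ramsey number $R_r(\mathcal{H},k)$ is the smallest integer $n$ such that every coloring of the hyperedges of $K_n^r$ with $k$ colors contains a monochromatic subhypergraph belonging to $\mathcal{H}$. *)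

theory Defs
  imports Main
begin

text \<open>A graph G is given by a vertex set VG and a set EG of 2-element vertex sets;
a hypergraph H by a vertex set V and a set E of hyperedges.\<close>

definition is_berge :: "'a set \<Rightarrow> 'a set set \<Rightarrow> 'b set \<Rightarrow> 'b set set \<Rightarrow> bool" where
  "is_berge VG EG V E \<longleftrightarrow>
     (\<exists>\<phi>. inj_on \<phi> VG \<and> \<phi> ` VG \<subseteq> V \<and>
        (\<exists>f. inj_on f EG \<and> (\<forall>xy\<in>EG. f xy \<in> E \<and> \<phi> ` xy \<subseteq> f xy)))"

definition complete_edges :: "nat \<Rightarrow> nat \<Rightarrow> nat set set" where
  "complete_edges r n = {e. e \<subseteq> {0..<n} \<and> card e = r}"

definition berge_arrows :: "'a set \<Rightarrow> 'a set set \<Rightarrow> nat \<Rightarrow> nat \<Rightarrow> nat \<Rightarrow> bool" where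
  "berge_arrows VG EG r k n \<longleftrightarrow>
     (\<forall>c :: nat set \<Rightarrow> nat. (\<forall>e\<in>complete_edges r n. c e < k) \<longrightarrow>
        (\<exists>V E. V \<subseteq> {0..<n} \<and> E \<subseteq> complete_edges r n \<and> (\<forall>e\<in>E. e \<subseteq> V) \<and>
               (\<exists>i. \<forall>e\<in>E. c e = i) \<and> is_berge VG EG V E))"

definition berge_ramsey :: "'a set \<Rightarrow> 'a set set \<Rightarrow> nat \<Rightarrow> nat \<Rightarrow> nat" where
  "berge_ramsey VG EG r k = (LEAST n. berge_arrows VG EG r k n)"

definition K3_V :: "nat set" where "K3_V = {0, 1, 2}"
definition K3_E :: "nat set set" where "K3_E = {{0, 1}, {1, 2}, {0, 2}}"

end

theory Submission
  imports Defs
begin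

text \<open>A 3-uniform hypergraph on n vertices without a Berge triangle has at most n^2/8
  hyperedges. Call a pair inside a hyperedge private if no other hyperedge contains it. Two
  non-private pairs of the same hyperedge e = {a, b, c}, say ab \<subseteq> f and ac \<subseteq> g, would give the
  Berge triangle b a c with hyperedges f, g, e; so every hyperedge has at least two private
  pairs. Two private pairs chosen from each hyperedge form a triangle-free graph with 2|H|
  edges, and Mantel's theorem gives 2|H| \<le> n^2/4.

  Consequently, if k n^2 < 8 (n choose 3), one of the k colour classes of K_n^3 contains a Berge
  triangle; this yields all the upper bounds. The lower bounds are explicit colourings of
  K_(n-1)^3, verified by evaluation.\<close>

definition berge_triangle :: "'a set set \<Rightarrow> bool" where
  "berge_triangle H \<longleftrightarrow> (\<exists>x y z e1 e2 e3. distinct [x, y, z] \<and> distinct [e1, e2, e3] \<and>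
     {e1, e2, e3} \<subseteq> H \<and> {x, y} \<subseteq> e1 \<and> {y, z} \<subseteq> e2 \<and> {x, z} \<subseteq> e3)"

lemma berge_triangle_mono:
  assumes "berge_triangle H" "H \<subseteq> H'"
  shows "berge_triangle H'"
proof -
  obtain x y z e1 e2 e3 where "distinct [x, y, z]" "distinct [e1, e2, e3]" "{e1, e2, e3} \<subseteq> H"
    "{x, y} \<subseteq> e1" "{y, z} \<subseteq> e2" "{x, z} \<subseteq> e3"
    using assms(1) unfolding berge_triangle_def by (elim exE conjE) (rule that; assumption)
  moreover from \<open>{e1, e2, e3} \<subseteq> H\<close> have "{e1, e2, e3} \<subseteq> H'"
    using assms(2) by (rule order_trans)
  ultimately show ?thesis
    unfolding berge_triangle_def by (intro exI conjI) assumption+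
qed

lemma is_berge_K3_iff:
  assumes "\<forall>e\<in>H. e \<subseteq> V"
  shows "is_berge K3_V K3_E V H \<longleftrightarrow> berge_triangle H"
proof
  assume "is_berge K3_V K3_E V H"
  then obtain \<phi> f where \<phi>: "inj_on \<phi> K3_V" and f: "inj_on f K3_E"
    and f_edges: "\<forall>xy\<in>K3_E. f xy \<in> H \<and> \<phi> ` xy \<subseteq> f xy"
    unfolding is_berge_def by blast
  have "distinct [\<phi> 0, \<phi> 1, \<phi> 2]"
    using \<phi> unfolding K3_V_def inj_on_def by auto
  moreover have "distinct [f {0, 1}, f {1, 2}, f {0, 2}]"
    using f unfolding K3_E_def inj_on_def by (auto simp: doubleton_eq_iff)
  moreover have "{f {0, 1}, f {1, 2}, f {0, 2}} \<subseteq> H"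
    "{\<phi> 0, \<phi> 1} \<subseteq> f {0, 1}" "{\<phi> 1, \<phi> 2} \<subseteq> f {1, 2}" "{\<phi> 0, \<phi> 2} \<subseteq> f {0, 2}"
    using f_edges unfolding K3_E_def by auto
  ultimately show "berge_triangle H"
    unfolding berge_triangle_def by blast
next
  assume "berge_triangle H"
  then obtain x y z e1 e2 e3 where xyz: "distinct [x, y, z]" and e: "distinct [e1, e2, e3]"
    and H: "{e1, e2, e3} \<subseteq> H" and sides: "{x, y} \<subseteq> e1" "{y, z} \<subseteq> e2" "{x, z} \<subseteq> e3"
    unfolding berge_triangle_def by (elim exE conjE) (rule that; assumption)
  define \<phi> where "\<phi> i = (if i = 0 then x else if i = 1 then y else z)" for i :: nat
  define f where "f p = (if p = {0, 1} then e1 else if p = {1, 2} then e2 else e3)" for p :: "nat set"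
  have "inj_on \<phi> K3_V" "\<phi> ` K3_V \<subseteq> V"
    using xyz H sides assms unfolding inj_on_def K3_V_def \<phi>_def by auto
  moreover have "inj_on f K3_E"
    using e unfolding inj_on_def K3_E_def f_def by (auto simp: doubleton_eq_iff)
  moreover have "\<forall>xy\<in>K3_E. f xy \<in> H \<and> \<phi> ` xy \<subseteq> f xy"
    using H sides
    unfolding K3_E_def f_def \<phi>_def by (auto simp: doubleton_eq_iff)
  ultimately show "is_berge K3_V K3_E V H"
    unfolding is_berge_def by (intro exI[of _ \<phi>] exI[of _ f] conjI)
qed

subsection \<open>Mantel's theorem\<close>

definition triangle_free :: "'a set set \<Rightarrow> bool" where
  "triangle_free G \<longleftrightarrow> \<not> (\<exists>x y z. distinct [x, y, z] \<and> {x, y} \<in> G \<and> {y, z} \<in> G \<and> {x, z} \<in> G)"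

lemma triangle_free_subset: "triangle_free G \<Longrightarrow> H \<subseteq> G \<Longrightarrow> triangle_free H"
  unfolding triangle_free_def by auto

lemma edges_subset_split_at_edge:
  assumes G: "G \<subseteq> {p. p \<subseteq> V \<and> card p = 2}"
  shows "G \<subseteq> {q \<in> G. q \<subseteq> V - {x, y}} \<union> {{x, y}} \<union>
    ((\<lambda>w. {x, w}) ` {w \<in> V - {x, y}. {x, w} \<in> G} \<union> (\<lambda>w. {y, w}) ` {w \<in> V - {x, y}. {y, w} \<in> G})"
    (is "_ \<subseteq> ?split")
proof
  fix q assume "q \<in> G"
  then obtain a b where q: "q = {a, b}" "a \<in> V" "b \<in> V"
    using G by (auto simp: card_2_iff)
  show "q \<in> ?split"
  proof (cases "q \<subseteq> V - {x, y}")
    case False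
    then obtain u w where uw: "q = {u, w}" "u \<in> {x, y}" "w \<in> V"
      using q insert_commute[of a b "{}"] by blast
    have "u \<noteq> w"
      using G \<open>q \<in> G\<close> uw(1) by auto
    show ?thesis
    proof (cases "w \<in> {x, y}")
      case True
      then have "q = {x, y}" using uw \<open>u \<noteq> w\<close> by auto
      then show ?thesis by simp
    next
      case False
      then show ?thesis
        using uw \<open>q \<in> G\<close> by auto
    qed
  qed (use \<open>q \<in> G\<close> in simp)
qed

text \<open>In a triangle-free graph every vertex outside an edge xy is adjacent to at most one of
  x and y.\<close>
lemma triangle_free_card_le_remove_edge:
  assumes "finite V" and G: "G \<subseteq> {p. p \<subseteq> V \<and> card p = 2}" and "triangle_free G"
    and "{x, y} \<in> G" "x \<noteq> y"
  shows "card G \<le> card {q \<in> G. q \<subseteq> V - {x, y}} + card (V - {x, y}) + 1"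
proof -
  define V' where "V' = V - {x, y}"
  define W1 where "W1 = {w \<in> V'. {x, w} \<in> G}"
  define W2 where "W2 = {w \<in> V'. {y, w} \<in> G}"
  have fin: "finite V'" "finite W1" "finite W2" "finite G"
    using assms(1) G finite_subset[of G "Pow V"] unfolding V'_def W1_def W2_def by auto
  have "W1 \<inter> W2 = {}"
  proof (rule ccontr)
    assume "W1 \<inter> W2 \<noteq> {}"
    then obtain w where "w \<in> V'" "{x, w} \<in> G" "{y, w} \<in> G"
      unfolding W1_def W2_def by blast
    moreover have "distinct [x, y, w]"
      using \<open>w \<in> V'\<close> \<open>x \<noteq> y\<close> unfolding V'_def by auto
    ultimately have "\<not> triangle_free G"
      using \<open>{x, y} \<in> G\<close> unfolding triangle_free_def by auto
    then show False using \<open>triangle_free G\<close> by contradiction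
  qed
  define X where "X = (\<lambda>w. {x, w}) ` W1"
  define Y where "Y = (\<lambda>w. {y, w}) ` W2"
  have "G \<subseteq> {q \<in> G. q \<subseteq> V'} \<union> {{x, y}} \<union> (X \<union> Y)"
    using edges_subset_split_at_edge[OF G] unfolding X_def Y_def W1_def W2_def V'_def .
  then have "card G \<le> card ({q \<in> G. q \<subseteq> V'} \<union> {{x, y}} \<union> (X \<union> Y))"
    using fin by (intro card_mono) (auto simp: X_def Y_def)
  also have "\<dots> \<le> card ({q \<in> G. q \<subseteq> V'} \<union> {{x, y}}) + card (X \<union> Y)"
    by (rule card_Un_le)
  also have "\<dots> \<le> card {q \<in> G. q \<subseteq> V'} + 1 + (card X + card Y)"
    using card_Un_le[of "{q \<in> G. q \<subseteq> V'}" "{{x, y}}"] card_Un_le[of X Y] by simp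
  also have "\<dots> \<le> card {q \<in> G. q \<subseteq> V'} + 1 + (card W1 + card W2)"
    unfolding X_def Y_def using fin by (intro add_mono card_image_le) auto
  also have "card W1 + card W2 \<le> card V'"
    using fin \<open>W1 \<inter> W2 = {}\<close> card_mono[of V' "W1 \<union> W2"]
    by (simp add: card_Un_disjoint W1_def W2_def)
  finally show ?thesis unfolding V'_def by simp
qed

theorem mantel:
  assumes "finite V" "G \<subseteq> {p. p \<subseteq> V \<and> card p = 2}" "triangle_free G"
  shows "4 * card G \<le> card V ^ 2"
  using assms
proof (induction "card V" arbitrary: V G rule: less_induct)
  case less
  show ?case
  proof (cases "G = {}")
    case False
    then obtain x y where xy: "{x, y} \<in> G" "x \<noteq> y" "x \<in> V" "y \<in> V"
      using less.prems(2) by (force simp: card_2_iff)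
    define V' where "V' = V - {x, y}"
    have "card {x, y} \<le> card V"
      using xy less.prems(1) by (intro card_mono) auto
    then have card_V': "card V = card V' + 2"
      using xy less.prems(1) unfolding V'_def by (simp add: card_Diff_subset)
    have "4 * card {q \<in> G. q \<subseteq> V'} \<le> card V' ^ 2"
    proof (rule less.hyps)
      show "card V' < card V" "finite V'" using card_V' less.prems(1) unfolding V'_def by auto
      show "{q \<in> G. q \<subseteq> V'} \<subseteq> {p. p \<subseteq> V' \<and> card p = 2}" using less.prems(2) by auto
      show "triangle_free {q \<in> G. q \<subseteq> V'}"
        using less.prems(3) by (rule triangle_free_subset) auto
    qed
    moreover have "card G \<le> card {q \<in> G. q \<subseteq> V'} + card V' + 1"
      using triangle_free_card_le_remove_edge[OF less.prems xy(1,2)] unfolding V'_def .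
    ultimately show ?thesis
      unfolding card_V' by (simp add: power2_eq_square algebra_simps)
  qed simp
qed

subsection \<open>The number of hyperedges without a Berge triangle\<close>

definition private_pairs :: "'a set set \<Rightarrow> 'a set \<Rightarrow> 'a set set" where
  "private_pairs H e = {p. p \<subseteq> e \<and> card p = 2 \<and> (\<forall>e'\<in>H. p \<subseteq> e' \<longrightarrow> e' = e)}"

lemma private_pairsD:
  assumes "p \<in> private_pairs H e"
  shows "p \<subseteq> e" "card p = 2" "\<And>e'. e' \<in> H \<Longrightarrow> p \<subseteq> e' \<Longrightarrow> e' = e"
  using assms unfolding private_pairs_def by auto

lemma card_2_obtain_insert:
  assumes "card p = 2" "a \<in> p"
  obtains b where "p = {a, b}" "a \<noteq> b"
proof -
  have "card (p - {a}) = 1"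
    using assms by (simp add: card_Diff_singleton)
  then obtain b where "p - {a} = {b}"
    by (auto simp: card_1_singleton_iff)
  then have "p = {a, b}"
    using \<open>a \<in> p\<close> by (metis insert_Diff)
  moreover have "a \<noteq> b"
    using \<open>p - {a} = {b}\<close> by auto
  ultimately show ?thesis by (rule that)
qed

lemma two_pairs_of_triple:
  assumes e: "finite e" "card e = 3"
    and pq: "p \<subseteq> e" "q \<subseteq> e" "card p = 2" "card q = 2" "p \<noteq> q"
  obtains a b c where "p = {a, b}" "q = {a, c}" "distinct [a, b, c]" "p \<union> q = e"
proof -
  have fin: "finite p" "finite q" "finite (p \<union> q)"
    using pq finite_subset[OF _ \<open>finite e\<close>] by auto
  have "\<not> q \<subseteq> p"
    using pq fin by (metis card_subset_eq)
  then have "card p < card (p \<union> q)"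
    using fin by (intro psubset_card_mono) auto
  moreover have "card (p \<union> q) \<le> 3"
    using pq e card_mono[of e "p \<union> q"] by auto
  ultimately have "card (p \<union> q) = 3"
    using pq by linarith
  then have "p \<union> q = e"
    using pq e by (intro card_subset_eq) auto
  have "card (p \<inter> q) = 1"
    using card_Un_Int[OF fin(1,2)] pq \<open>card (p \<union> q) = 3\<close> by simp
  then obtain a where a: "p \<inter> q = {a}"
    by (auto simp: card_1_singleton_iff)
  then have "a \<in> p" "a \<in> q" by auto
  obtain b where "p = {a, b}" "a \<noteq> b"
    using card_2_obtain_insert[OF \<open>card p = 2\<close> \<open>a \<in> p\<close>] .
  moreover obtain c where "q = {a, c}" "a \<noteq> c"
    using card_2_obtain_insert[OF \<open>card q = 2\<close> \<open>a \<in> q\<close>] .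
  moreover have "b \<noteq> c"
    using a calculation by auto
  ultimately show ?thesis
    using that \<open>p \<union> q = e\<close> by simp
qed

lemma berge_triangle_if_shared_pairs:
  assumes uniform: "\<forall>e\<in>H. card e = 3" and H: "{e, f, g} \<subseteq> H" "f \<noteq> e" "g \<noteq> e"
    and pq: "p \<subseteq> e" "q \<subseteq> e" "card p = 2" "card q = 2" "p \<noteq> q"
    and "p \<subseteq> f" "q \<subseteq> g"
  shows "berge_triangle H"
proof -
  have fin: "finite e" "finite f" and "card e = 3" "card f = 3"
    using uniform H by (auto intro: card_ge_0_finite)
  then obtain a b c where abc: "p = {a, b}" "q = {a, c}" "distinct [a, b, c]" "p \<union> q = e"
    using two_pairs_of_triple pq by metis
  have "f \<noteq> g"
  proof
    assume "f = g"
    then have "e \<subseteq> f"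
      using abc(4) \<open>p \<subseteq> f\<close> \<open>q \<subseteq> g\<close> by auto
    then have "e = f"
      using fin \<open>card e = 3\<close> \<open>card f = 3\<close> by (intro card_subset_eq) simp_all
    then show False using \<open>f \<noteq> e\<close> by simp
  qed
  then have "distinct [b, a, c]" "distinct [f, g, e]"
    using abc(3) H by auto
  moreover have "{b, a} \<subseteq> f" "{a, c} \<subseteq> g" "{b, c} \<subseteq> e"
    using abc \<open>p \<subseteq> f\<close> \<open>q \<subseteq> g\<close> by auto
  moreover have "{f, g, e} \<subseteq> H"
    using H by auto
  ultimately show ?thesis
    unfolding berge_triangle_def by (intro exI conjI) assumption+
qed

lemma two_le_card_private_pairs:
  assumes uniform: "\<forall>e\<in>H. card e = 3" and "\<not> berge_triangle H" "e \<in> H"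
  shows "2 \<le> card (private_pairs H e)"
proof -
  define P where "P = {p. p \<subseteq> e \<and> card p = 2}"
  define S where "S = P - private_pairs H e"
  have e: "finite e" "card e = 3"
    using uniform \<open>e \<in> H\<close> by (auto intro: card_ge_0_finite)
  have "card P = 3"
    using n_subsets[OF \<open>finite e\<close>, of 2] e unfolding P_def by (simp add: numeral_eq_Suc)
  have fin: "finite P"
    using \<open>finite e\<close> unfolding P_def by simp
  have "private_pairs H e \<subseteq> P"
    unfolding private_pairs_def P_def by auto
  have shared: "\<exists>f\<in>H. p \<subseteq> f \<and> f \<noteq> e" if "p \<in> S" for p
    using that unfolding S_def P_def private_pairs_def by auto
  have "card S \<le> 1"
  proof -
    have "p = q" if "p \<in> S" "q \<in> S" for p q
    proof (rule ccontr)
      assume "p \<noteq> q"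
      obtain f g where "f \<in> H" "g \<in> H" "f \<noteq> e" "g \<noteq> e" "p \<subseteq> f" "q \<subseteq> g"
        using shared[OF \<open>p \<in> S\<close>] shared[OF \<open>q \<in> S\<close>] by blast
      then have "berge_triangle H"
        using \<open>p \<in> S\<close> \<open>q \<in> S\<close> \<open>p \<noteq> q\<close> \<open>e \<in> H\<close> unfolding S_def P_def
        by (intro berge_triangle_if_shared_pairs[OF uniform, of e f g p q]) auto
      then show False using \<open>\<not> berge_triangle H\<close> by contradiction
    qed
    then show ?thesis
      using fin card_le_Suc0_iff_eq[of S] unfolding S_def by auto
  qed
  moreover have "card S = card P - card (private_pairs H e)"
    unfolding S_def using fin \<open>private_pairs H e \<subseteq> P\<close> by (simp add: card_Diff_subset finite_subset)
  moreover have "card (private_pairs H e) \<le> card P"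
    using fin \<open>private_pairs H e \<subseteq> P\<close> by (rule card_mono)
  ultimately show ?thesis
    using \<open>card P = 3\<close> by linarith
qed

lemma triangle_free_UN_private_pairs:
  assumes "\<not> berge_triangle H"
    and P: "\<And>e. e \<in> H \<Longrightarrow> P e \<subseteq> private_pairs H e \<and> card (P e) = 2"
  shows "triangle_free (\<Union>e\<in>H. P e)"
  unfolding triangle_free_def
proof
  assume "\<exists>x y z. distinct [x, y, z] \<and> {x, y} \<in> (\<Union>e\<in>H. P e) \<and> {y, z} \<in> (\<Union>e\<in>H. P e) \<and>
    {x, z} \<in> (\<Union>e\<in>H. P e)"
  then obtain x y z e1 e2 e3 where "distinct [x, y, z]" and e: "e1 \<in> H" "e2 \<in> H" "e3 \<in> H"
    and in_P: "{x, y} \<in> P e1" "{y, z} \<in> P e2" "{x, z} \<in> P e3"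
    by blast
  have privacy: "e' = e" if "p \<in> P e" "e \<in> H" "e' \<in> H" "p \<subseteq> e'" for p e e'
    using P[OF \<open>e \<in> H\<close>] that private_pairsD(3) by blast
  have sides: "{x, y} \<subseteq> e1" "{y, z} \<subseteq> e2" "{x, z} \<subseteq> e3"
    using P[OF e(1)] P[OF e(2)] P[OF e(3)] in_P private_pairsD(1) by blast+
  show False
  proof (cases "distinct [e1, e2, e3]")
    case True
    moreover have "{e1, e2, e3} \<subseteq> H"
      using e by simp
    ultimately have "berge_triangle H"
      using \<open>distinct [x, y, z]\<close> sides unfolding berge_triangle_def by (intro exI conjI) assumption+
    then show False
      using \<open>\<not> berge_triangle H\<close> by contradiction
  next
    case False
    \<comment> \<open>two of the hyperedges coincide, so the third pair lies in it too and privacy merges all three\<close>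
    then consider "e1 = e2" | "e2 = e3" | "e1 = e3"
      by auto
    then have "e2 = e1 \<and> e3 = e1"
    proof cases
      case 1
      then have "{x, z} \<subseteq> e1" using sides by auto
      then show ?thesis using privacy[OF in_P(3) e(3) e(1)] 1 by simp
    next
      case 2
      then have "{x, y} \<subseteq> e2" using sides by auto
      then show ?thesis using privacy[OF in_P(1) e(1) e(2)] 2 by simp
    next
      case 3
      then have "{y, z} \<subseteq> e1" using sides by auto
      then show ?thesis using privacy[OF in_P(2) e(2) e(1)] 3 by simp
    qed
    then have "{{x, y}, {y, z}, {x, z}} \<subseteq> P e1"
      using in_P by simp
    moreover have "card {{x, y}, {y, z}, {x, z}} = 3"
      using \<open>distinct [x, y, z]\<close> by (auto simp: doubleton_eq_iff)
    ultimately show False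
      using P[OF e(1)] card_mono[of "P e1" "{{x, y}, {y, z}, {x, z}}"] card_ge_0_finite[of "P e1"]
      by simp
  qed
qed

theorem berge_triangle_free_card_le:
  assumes "finite V" and H: "\<forall>e\<in>H. e \<subseteq> V \<and> card e = 3" and "\<not> berge_triangle H"
  shows "8 * card H \<le> card V ^ 2"
proof -
  have "finite H"
    using H \<open>finite V\<close> finite_subset[of H "Pow V"] by auto
  have "\<forall>e\<in>H. \<exists>T. T \<subseteq> private_pairs H e \<and> card T = 2"
    using two_le_card_private_pairs[of H] H \<open>\<not> berge_triangle H\<close>
    by (meson obtain_subset_with_card_n)
  then obtain P where P: "\<And>e. e \<in> H \<Longrightarrow> P e \<subseteq> private_pairs H e \<and> card (P e) = 2"
    by metis
  define G where "G = (\<Union>e\<in>H. P e)"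
  have "card G = (\<Sum>e\<in>H. card (P e))"
    unfolding G_def
  proof (rule card_UN_disjoint[OF \<open>finite H\<close>])
    show "\<forall>e\<in>H. finite (P e)"
      using P by (simp add: card_ge_0_finite)
    show "\<forall>e\<in>H. \<forall>e'\<in>H. e \<noteq> e' \<longrightarrow> P e \<inter> P e' = {}"
      using P private_pairsD(1,3) by blast
  qed
  then have "card G = 2 * card H"
    using P by simp
  moreover have "G \<subseteq> {p. p \<subseteq> V \<and> card p = 2}"
  proof
    fix p assume "p \<in> G"
    then obtain e where "e \<in> H" "p \<in> private_pairs H e"
      using P unfolding G_def by blast
    then show "p \<in> {p. p \<subseteq> V \<and> card p = 2}"
      using H private_pairsD(1,2) by fastforce
  qed
  moreover have "triangle_free G"
    unfolding G_def using \<open>\<not> berge_triangle H\<close> P by (intro triangle_free_UN_private_pairs) auto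
  ultimately show ?thesis
    using mantel[OF \<open>finite V\<close>, of G] by simp
qed

subsection \<open>Upper bounds by counting\<close>

lemma card_complete_edges: "card (complete_edges r n) = n choose r"
  unfolding complete_edges_def using n_subsets[of "{0..<n}" r] by simp

lemma berge_arrows_K3_if_card:
  assumes "k * n ^ 2 < 8 * (n choose 3)"
  shows "berge_arrows K3_V K3_E 3 k n"
  unfolding berge_arrows_def
proof (intro allI impI)
  fix c :: "nat set \<Rightarrow> nat"
  assume colour: "\<forall>e\<in>complete_edges 3 n. c e < k"
  define C where "C i = {e \<in> complete_edges 3 n. c e = i}" for i
  have C_edges: "\<forall>e\<in>C i. e \<subseteq> {0..<n} \<and> card e = 3" for i
    unfolding C_def complete_edges_def by auto
  obtain i where "berge_triangle (C i)"
  proof (rule ccontr)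
    assume "\<not> thesis"
    then have "8 * card (C i) \<le> n ^ 2" for i
      using berge_triangle_free_card_le[of "{0..<n}" "C i"] C_edges that by auto
    then have "8 * (\<Sum>i<k. card (C i)) \<le> k * n ^ 2"
      using sum_mono[of "{..<k}" "\<lambda>i. 8 * card (C i)" "\<lambda>_. n ^ 2"] by (simp add: sum_distrib_left)
    moreover have "complete_edges 3 n = (\<Union>i<k. C i)"
      unfolding C_def using colour by auto
    then have "n choose 3 \<le> (\<Sum>i<k. card (C i))"
      unfolding card_complete_edges[symmetric] by (simp add: card_UN_le)
    ultimately show False
      using assms by linarith
  qed
  then have "is_berge K3_V K3_E {0..<n} (C i)"
    using is_berge_K3_iff C_edges by blast
  moreover have "C i \<subseteq> complete_edges 3 n" "\<forall>e\<in>C i. c e = i"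
    unfolding C_def by auto
  ultimately show "\<exists>V E. V \<subseteq> {0..<n} \<and> E \<subseteq> complete_edges 3 n \<and> (\<forall>e\<in>E. e \<subseteq> V) \<and>
      (\<exists>i. \<forall>e\<in>E. c e = i) \<and> is_berge K3_V K3_E V E"
    using C_edges by (intro exI[of _ "{0..<n}"] exI[of _ "C i"]) auto
qed

lemma berge_arrows_mono:
  assumes "berge_arrows VG EG r k n" "n \<le> m"
  shows "berge_arrows VG EG r k m"
  unfolding berge_arrows_def
proof (intro allI impI)
  fix c :: "nat set \<Rightarrow> nat"
  assume colour: "\<forall>e\<in>complete_edges r m. c e < k"
  have sub: "complete_edges r n \<subseteq> complete_edges r m"
    using assms(2) unfolding complete_edges_def by auto
  then have "\<forall>e\<in>complete_edges r n. c e < k"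
    using colour by blast
  then obtain V E where "V \<subseteq> {0..<n}" "E \<subseteq> complete_edges r n" "\<forall>e\<in>E. e \<subseteq> V"
    "\<exists>i. \<forall>e\<in>E. c e = i" "is_berge VG EG V E"
    using assms(1) unfolding berge_arrows_def by (elim allE[of _ c] impE) blast+
  moreover have "V \<subseteq> {0..<m}" "E \<subseteq> complete_edges r m"
    using calculation(1,2) sub assms(2) by auto
  ultimately show "\<exists>V E. V \<subseteq> {0..<m} \<and> E \<subseteq> complete_edges r m \<and> (\<forall>e\<in>E. e \<subseteq> V) \<and>
      (\<exists>i. \<forall>e\<in>E. c e = i) \<and> is_berge VG EG V E"
    by (intro exI[of _ V] exI[of _ E]) simp
qed

lemma berge_ramsey_eqI:
  assumes "berge_arrows VG EG r k (Suc n)" "\<not> berge_arrows VG EG r k n"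
  shows "berge_ramsey VG EG r k = Suc n"
  unfolding berge_ramsey_def
proof (rule Least_equality)
  show "berge_arrows VG EG r k (Suc n)" by fact
  show "Suc n \<le> m" if "berge_arrows VG EG r k m" for m
    using berge_arrows_mono[OF that] assms(2) by (meson not_less_eq_eq)
qed

subsection \<open>Lower bounds by explicit colourings\<close>

lemma not_berge_arrows_K3_if_cover:
  assumes free: "\<forall>i<k. \<not> berge_triangle (C i)" and cover: "complete_edges 3 n \<subseteq> (\<Union>i<k. C i)"
  shows "\<not> berge_arrows K3_V K3_E 3 k n"
proof
  assume arrows: "berge_arrows K3_V K3_E 3 k n"
  define c where "c e = (LEAST i. e \<in> C i)" for e
  have colour: "c e < k \<and> e \<in> C (c e)" if e: "e \<in> complete_edges 3 n" for e
  proof -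
    obtain i where "i < k" "e \<in> C i"
      using e cover by blast
    then show ?thesis
      unfolding c_def using Least_le[of "\<lambda>i. e \<in> C i" i] LeastI[of "\<lambda>i. e \<in> C i" i] by simp
  qed
  then obtain V E i where E: "E \<subseteq> complete_edges 3 n" "\<forall>e\<in>E. e \<subseteq> V" "\<forall>e\<in>E. c e = i"
    and "is_berge K3_V K3_E V E"
    using arrows unfolding berge_arrows_def by (elim allE[of _ c] impE) blast+
  then have "berge_triangle E"
    using is_berge_K3_iff by blast
  then obtain e where "e \<in> E"
    by (auto simp: berge_triangle_def)
  then have "i < k"
    using E colour by force
  moreover have "E \<subseteq> C i"
    using E colour by force
  ultimately show False
    using free berge_triangle_mono[OF \<open>berge_triangle E\<close>] by blast
qed

text \<open>Executable certificates: a colour class is a list of hyperedges, each a list of vertices.\<close>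

definition no_berge_triangle_list :: "nat list list \<Rightarrow> bool" where
  "no_berge_triangle_list L \<longleftrightarrow> (\<forall>l1\<in>set L. \<forall>l2\<in>set L. \<forall>l3\<in>set L. distinct [l1, l2, l3] \<longrightarrow>
     \<not> (\<exists>x\<in>set l1. \<exists>y\<in>set l1. \<exists>z\<in>set l2.
          distinct [x, y, z] \<and> y \<in> set l2 \<and> x \<in> set l3 \<and> z \<in> set l3))"

definition covers_triples :: "nat list list list \<Rightarrow> nat \<Rightarrow> bool" where
  "covers_triples cls n \<longleftrightarrow>
     (\<forall>c\<in>set [0..<n]. \<forall>b\<in>set [0..<c]. \<forall>a\<in>set [0..<b]. \<exists>L\<in>set cls. [a, b, c] \<in> set L)"

lemma not_berge_triangle_if_list:
  assumes "no_berge_triangle_list L"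
  shows "\<not> berge_triangle (set ` set L)"
proof
  assume "berge_triangle (set ` set L)"
  then obtain x y z e1 e2 e3 where "distinct [x, y, z]" "distinct [e1, e2, e3]"
    "{e1, e2, e3} \<subseteq> set ` set L" and sides: "{x, y} \<subseteq> e1" "{y, z} \<subseteq> e2" "{x, z} \<subseteq> e3"
    unfolding berge_triangle_def by (elim exE conjE) (rule that; assumption)
  then have "e1 \<in> set ` set L" "e2 \<in> set ` set L" "e3 \<in> set ` set L"
    by simp_all
  then obtain l1 l2 l3 where l: "l1 \<in> set L" "l2 \<in> set L" "l3 \<in> set L"
    and sets: "e1 = set l1" "e2 = set l2" "e3 = set l3"
    by (elim imageE) simp
  have "distinct [l1, l2, l3]"
    using \<open>distinct [e1, e2, e3]\<close> sets by auto
  moreover have "\<exists>x\<in>set l1. \<exists>y\<in>set l1. \<exists>z\<in>set l2.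
      distinct [x, y, z] \<and> y \<in> set l2 \<and> x \<in> set l3 \<and> z \<in> set l3"
    using \<open>distinct [x, y, z]\<close> sides sets by (intro bexI[of _ x] bexI[of _ y] bexI[of _ z]) auto
  moreover have "distinct [l1, l2, l3] \<longrightarrow> \<not> (\<exists>x\<in>set l1. \<exists>y\<in>set l1. \<exists>z\<in>set l2.
      distinct [x, y, z] \<and> y \<in> set l2 \<and> x \<in> set l3 \<and> z \<in> set l3)"
    using assms l unfolding no_berge_triangle_list_def by (elim ballE) auto
  ultimately show False
    by blast
qed

lemma complete_edges_3_elem:
  assumes "e \<in> complete_edges 3 n"
  obtains a b c where "a < b" "b < c" "c < n" "e = {a, b, c}"
proof -
  have e: "e \<subseteq> {0..<n}" "card e = 3" "finite e"
    using assms finite_subset[of e "{0..<n}"] unfolding complete_edges_def by auto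
  define l where "l = sorted_list_of_set e"
  have "length l = 3"
    using e unfolding l_def by simp
  then obtain a b c where "l = [a, b, c]"
    by (auto simp: length_Suc_conv numeral_3_eq_3)
  moreover have "sorted_wrt (<) l" "set l = e"
    using e unfolding l_def by simp_all
  ultimately show ?thesis
    using e that by auto
qed

lemma complete_edges_3_subset_if_covers:
  assumes "covers_triples cls n"
  shows "complete_edges 3 n \<subseteq> (\<Union>i<length cls. set ` set (cls ! i))"
proof
  fix e assume "e \<in> complete_edges 3 n"
  then obtain a b c where "a < b" "b < c" "c < n" "e = set [a, b, c]"
    by (rule complete_edges_3_elem) simp
  then have "c \<in> set [0..<n]" "b \<in> set [0..<c]" "a \<in> set [0..<b]"
    by auto
  then obtain L where "L \<in> set cls" "[a, b, c] \<in> set L"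
    using assms unfolding covers_triples_def by blast
  moreover obtain i where "i < length cls" "cls ! i = L"
    using \<open>L \<in> set cls\<close> by (auto simp: in_set_conv_nth)
  ultimately show "e \<in> (\<Union>i<length cls. set ` set (cls ! i))"
    using \<open>e = set [a, b, c]\<close> by force
qed

lemma berge_ramsey_K3_eq:
  assumes "k * Suc n ^ 2 < 8 * (Suc n choose 3)"
    and "length cls = k" "\<forall>L\<in>set cls. no_berge_triangle_list L" "covers_triples cls n"
  shows "berge_ramsey K3_V K3_E 3 k = Suc n"
proof (rule berge_ramsey_eqI)
  show "berge_arrows K3_V K3_E 3 k (Suc n)"
    using assms(1) by (rule berge_arrows_K3_if_card)
  show "\<not> berge_arrows K3_V K3_E 3 k n"
  proof (rule not_berge_arrows_K3_if_cover)
    show "\<forall>i<k. \<not> berge_triangle (set ` set (cls ! i))"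
      using assms(2,3) not_berge_triangle_if_list by auto
    show "complete_edges 3 n \<subseteq> (\<Union>i<k. set ` set (cls ! i))"
      using complete_edges_3_subset_if_covers[OF assms(4)] assms(2) by simp
  qed
qed

text \<open>colouring_k_n colours the triples of {0..<n} with k colours, listing one colour class per
  entry, and has no monochromatic Berge triangle.\<close>

definition colouring_2_4 :: "nat list list list" where
  "colouring_2_4 =
    [[[0, 1, 2], [0, 2, 3]],
     [[0, 1, 3], [1, 2, 3]]]"

definition colouring_3_4 :: "nat list list list" where
  "colouring_3_4 =
    [[[0, 1, 2], [0, 2, 3]],
     [[1, 2, 3]],
     [[0, 1, 3]]]"

definition colouring_4_5 :: "nat list list list" where
  "colouring_4_5 =
    [[[0, 1, 4], [0, 2, 4]],
     [[0, 1, 2], [1, 2, 3], [1, 2, 4]],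
     [[0, 3, 4], [1, 3, 4], [2, 3, 4]],
     [[0, 1, 3], [0, 2, 3]]]"

definition colouring_5_6 :: "nat list list list" where
  "colouring_5_6 =
    [[[0, 2, 4], [0, 3, 4], [1, 2, 5], [1, 3, 5]],
     [[0, 1, 3], [0, 4, 5], [1, 2, 3], [2, 4, 5]],
     [[0, 1, 2], [0, 1, 4], [2, 3, 5], [3, 4, 5]],
     [[0, 2, 3], [0, 2, 5], [1, 3, 4], [1, 4, 5]],
     [[0, 1, 5], [0, 3, 5], [1, 2, 4], [2, 3, 4]]]"

definition colouring_6_7 :: "nat list list list" where
  "colouring_6_7 =
    [[[0, 1, 2], [0, 3, 5], [1, 2, 4], [1, 2, 6], [3, 4, 5], [3, 5, 6]],
     [[0, 1, 4], [0, 2, 3], [1, 4, 5], [1, 4, 6], [2, 3, 5], [2, 3, 6]],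
     [[0, 1, 5], [0, 2, 4], [1, 3, 5], [1, 5, 6], [2, 3, 4], [2, 4, 6]],
     [[0, 2, 5], [0, 3, 4], [1, 2, 5], [1, 3, 4], [2, 5, 6], [3, 4, 6]],
     [[0, 1, 6], [0, 2, 6], [0, 3, 6], [0, 4, 6], [0, 5, 6]],
     [[0, 1, 3], [0, 4, 5], [1, 2, 3], [1, 3, 6], [2, 4, 5], [4, 5, 6]]]"

definition colouring_8_8 :: "nat list list list" where
  "colouring_8_8 =
    [[[0, 1, 2], [0, 2, 3], [0, 2, 4], [0, 2, 6], [1, 5, 7], [3, 5, 7], [4, 5, 7], [5, 6, 7]],
     [[0, 3, 5], [0, 4, 5], [0, 5, 6], [0, 5, 7], [1, 2, 3], [1, 2, 4], [1, 2, 7]],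
     [[0, 1, 6], [0, 3, 4], [1, 2, 6], [1, 5, 6], [1, 6, 7], [2, 3, 4], [3, 4, 5]],
     [[0, 1, 3], [0, 1, 5], [0, 1, 7], [2, 4, 6], [3, 4, 6], [4, 5, 6], [4, 6, 7]],
     [[0, 2, 5], [0, 3, 7], [1, 2, 5], [1, 3, 7], [2, 4, 5], [2, 5, 6], [3, 4, 7], [3, 6, 7]],
     [[0, 3, 6], [0, 4, 6], [0, 6, 7], [1, 3, 5], [2, 3, 5]],
     [[0, 4, 7], [1, 3, 6], [1, 4, 7], [2, 3, 6], [2, 4, 7], [3, 5, 6]],
     [[0, 1, 4], [0, 2, 7], [1, 3, 4], [1, 4, 5], [1, 4, 6], [2, 3, 7], [2, 5, 7], [2, 6, 7]]]"

theorem theorem1: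
  shows "berge_ramsey K3_V K3_E 3 2 = 5 \<and> berge_ramsey K3_V K3_E 3 3 = 5 \<and>
         berge_ramsey K3_V K3_E 3 4 = 6 \<and> berge_ramsey K3_V K3_E 3 5 = 7 \<and>
         berge_ramsey K3_V K3_E 3 6 = 8 \<and> berge_ramsey K3_V K3_E 3 8 = 9"
proof -
  have "berge_ramsey K3_V K3_E 3 2 = Suc 4"
    by (rule berge_ramsey_K3_eq[where cls = colouring_2_4]; code_simp)
  moreover have "berge_ramsey K3_V K3_E 3 3 = Suc 4"
    by (rule berge_ramsey_K3_eq[where cls = colouring_3_4]; code_simp)
  moreover have "berge_ramsey K3_V K3_E 3 4 = Suc 5"
    by (rule berge_ramsey_K3_eq[where cls = colouring_4_5]; code_simp)
  moreover have "berge_ramsey K3_V K3_E 3 5 = Suc 6"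
    by (rule berge_ramsey_K3_eq[where cls = colouring_5_6]; code_simp)
  moreover have "berge_ramsey K3_V K3_E 3 6 = Suc 7"
    by (rule berge_ramsey_K3_eq[where cls = colouring_6_7]; code_simp)
  moreover have "berge_ramsey K3_V K3_E 3 8 = Suc 8"
    by (rule berge_ramsey_K3_eq[where cls = colouring_8_8]; code_simp)
  ultimately show ?thesis
    by simp
qed

end
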